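(* Let $\mathbb{T}\subseteq\mathbb{R}$ be a nonempty closed set that is bounded above or bounded below. Then there is no càdlàg $\mathbb{T}$-valued process $(\xi_t)_{t\ge0}$ with deterministic initial value $\xi_0=x\in\mathbb{T}$ satisfying all three conditions (I'), (II) and (III).
   Context: Conditions on a $\mathbb{T}$-valued càdlàg process $(\xi_t)_{t\ge0}$: (I') for all $x<y<z$ in $\mathbb{T}$ and $0\le r<t$, if $(\xi_r,\xi_t)=(x,z)$ or $(\xi_r,\xi_t)=(z,x)$ then $\xi_s=y$ for some $s\in[r,t]$; (II) $(\xi_t)$ is a martingale; (III) $(\xi_t^2-t)$ is a martingale. *)

theory Defs
  imports "HOL-Probability.Probability"
begin

definition cadlag :: "(real \<Rightarrow> real) \<Rightarrow> bool" where
  "cadlag f \<longleftrightarrow> (\<forall>t\<ge>0. continuous (at_right t) f) \<and>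
                 (\<forall>t>0. \<exists>l. (f \<longlongrightarrow> l) (at_left t))"

definition filtration_on :: "'a measure \<Rightarrow> (real \<Rightarrow> 'a measure) \<Rightarrow> bool" where
  "filtration_on M F \<longleftrightarrow> (\<forall>t\<ge>0. subalgebra M (F t)) \<and>
     (\<forall>s t. 0 \<le> s \<and> s \<le> t \<longrightarrow> sets (F s) \<subseteq> sets (F t))"

definition martingale :: "'a measure \<Rightarrow> (real \<Rightarrow> 'a measure) \<Rightarrow> (real \<Rightarrow> 'a \<Rightarrow> real) \<Rightarrow> bool" where
  "martingale M F X \<longleftrightarrow>
     (\<forall>t\<ge>0. X t \<in> borel_measurable (F t) \<and> integrable M (X t)) \<and>
     (\<forall>s t. 0 \<le> s \<and> s \<le> t \<longrightarrow> (AE \<omega> in M. real_cond_exp M (F s) (X t) \<omega> = X s \<omega>))"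

definition condition_I' :: "real set \<Rightarrow> (real \<Rightarrow> real) \<Rightarrow> bool" where
  "condition_I' T p \<longleftrightarrow>
     (\<forall>x\<in>T. \<forall>y\<in>T. \<forall>z\<in>T. \<forall>r t. x < y \<and> y < z \<and> 0 \<le> r \<and> r < t \<and>
        ((p r, p t) = (x, z) \<or> (p r, p t) = (z, x)) \<longrightarrow> (\<exists>s\<in>{r..t}. p s = y))"

end

theory Submission
  imports Defs
begin

(*
  Reflecting x to -x if necessary, let T be bounded below by m. Put b = x + 1 and stop \<xi> at
  the first dyadic time \<tau> = k/2^n \<le> N at which it exceeds b, or at N. Optional
  stopping for \<xi> and \<xi>^2 - t gives E \<xi>_\<tau> = x and E \<xi>_\<tau>^2 = x^2 + E \<tau>. As \<xi>_\<tau> \<ge> m,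
  the event {\<xi>_\<tau> \<le> b}, on which \<tau> = N, has probability at least 1/(b - m), so
  E \<xi>_\<tau>^2 \<ge> N/(b - m) for every n.

  On the other hand, by (I') a path that has stayed at most b cannot jump, at its first passage
  time, over a point K of T above b (if there is none, K = b will do). Right-continuity then
  gives \<xi>_\<tau> \<le> K + 1 for all large n, and optional stopping on {\<xi>_\<tau> > K + 1} bounds
  E \<xi>_\<tau>^2 by max(m^2, (K + 1)^2) plus a term that tends to 0 by dominated convergence.
  For N large the two bounds are incompatible.
*)

lemma eventually_at_right_imp_interval:
  fixes t :: real
  assumes "eventually P (at_right t)" and "P t"
  shows "\<exists>d>0. \<forall>u. t \<le> u \<and> u < t + d \<longrightarrow> P u"
proof -
  obtain b where "t < b" and "\<forall>u>t. u < b \<longrightarrow> P u"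
    using assms(1) by (auto simp: eventually_at_right_field)
  then show ?thesis
    using assms(2) by (intro exI[of _ "b - t"]) (auto simp: le_less)
qed

lemma eventually_dyadic_point_in_interval:
  fixes t \<delta> :: real
  assumes "0 \<le> t" and "0 < \<delta>"
  shows "eventually (\<lambda>n. \<exists>k::nat. t \<le> real k / 2^n \<and> real k / 2^n < t + \<delta>) sequentially"
proof -
  obtain n0 where n0: "(1/2::real) ^ n0 < \<delta>"
    using real_arch_pow_inv[OF assms(2), of "1/2"] by auto
  have "\<exists>k::nat. t \<le> real k / 2^n \<and> real k / 2^n < t + \<delta>" if "n0 \<le> n" for n
  proof (intro exI conjI)
    define k where "k = nat \<lceil>t * 2^n\<rceil>"
    have k: "t * 2^n \<le> real k" "real k < t * 2^n + 1"
      using assms(1) by (auto simp: k_def) linarith+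
    show "t \<le> real k / 2^n"
      using k(1) by (simp add: le_divide_eq)
    have "(1/2::real) ^ n \<le> (1/2) ^ n0"
      using that by (simp add: power_decreasing)
    then have "1 / 2^n < \<delta>"
      using n0 by (simp add: power_one_over)
    moreover have "real k / 2^n < t + 1 / 2^n"
      using k(2) by (simp add: field_simps)
    ultimately show "real k / 2^n < t + \<delta>"
      by linarith
  qed
  then show ?thesis
    by (auto simp: eventually_sequentially)
qed

definition dyadic_passage_index :: "nat \<Rightarrow> real \<Rightarrow> (real \<Rightarrow> real) \<Rightarrow> nat \<Rightarrow> nat" where
  "dyadic_passage_index N b p n = (LEAST k. N * 2^n \<le> k \<or> b < p (real k / 2^n))"

definition dyadic_passage_time :: "nat \<Rightarrow> real \<Rightarrow> (real \<Rightarrow> real) \<Rightarrow> nat \<Rightarrow> real" where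
  "dyadic_passage_time N b p n = real (dyadic_passage_index N b p n) / 2^n"

lemma dyadic_passage_index_le: "dyadic_passage_index N b p n \<le> N * 2^n"
  unfolding dyadic_passage_index_def by (rule Least_le) simp

lemma dyadic_passage_index_eq_iff:
  "dyadic_passage_index N b p n = k \<longleftrightarrow>
     (N * 2^n \<le> k \<or> b < p (real k / 2^n)) \<and> (\<forall>j<k. \<not> (N * 2^n \<le> j \<or> b < p (real j / 2^n)))"
proof
  assume k: "dyadic_passage_index N b p n = k"
  show "(N * 2^n \<le> k \<or> b < p (real k / 2^n)) \<and> (\<forall>j<k. \<not> (N * 2^n \<le> j \<or> b < p (real j / 2^n)))"
    using LeastI[of "\<lambda>k. N * 2^n \<le> k \<or> b < p (real k / 2^n)" "N * 2^n"] not_less_Least k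
    unfolding dyadic_passage_index_def by auto
next
  assume "(N * 2^n \<le> k \<or> b < p (real k / 2^n)) \<and> (\<forall>j<k. \<not> (N * 2^n \<le> j \<or> b < p (real j / 2^n)))"
  then show "dyadic_passage_index N b p n = k"
    unfolding dyadic_passage_index_def by (intro Least_equality) (auto simp: not_less[symmetric])
qed

lemma dyadic_passage_time_nonneg: "0 \<le> dyadic_passage_time N b p n"
  by (simp add: dyadic_passage_time_def)

lemma dyadic_point_le_of_le:
  assumes "k \<le> N * 2^n"
  shows "real k / 2^n \<le> real N"
proof -
  have "real k \<le> real N * 2^n"
    using of_nat_mono[OF assms] by simp
  then show ?thesis
    by (simp add: divide_le_eq)
qed

lemma dyadic_passage_time_le: "dyadic_passage_time N b p n \<le> N"
  unfolding dyadic_passage_time_def by (rule dyadic_point_le_of_le[OF dyadic_passage_index_le])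

lemma dyadic_passage_time_cases:
  "dyadic_passage_time N b p n = N \<or> b < p (dyadic_passage_time N b p n)"
proof -
  have "N * 2^n \<le> dyadic_passage_index N b p n \<or> b < p (dyadic_passage_time N b p n)"
    unfolding dyadic_passage_time_def dyadic_passage_index_def by (rule LeastI[of _ "N * 2^n"]) simp
  moreover have "dyadic_passage_index N b p n = N * 2^n" if "N * 2^n \<le> dyadic_passage_index N b p n"
    using that dyadic_passage_index_le[of N b p n] by simp
  ultimately show ?thesis
    by (auto simp: dyadic_passage_time_def)
qed

lemma dyadic_passage_time_le_grid_point:
  assumes "b < p (real k / 2^n)"
  shows "dyadic_passage_time N b p n \<le> real k / 2^n"
proof -
  have "dyadic_passage_index N b p n \<le> k"
    unfolding dyadic_passage_index_def by (rule Least_le) (use assms in simp)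
  then show ?thesis
    by (simp add: dyadic_passage_time_def divide_right_mono)
qed

lemma Inf_le_dyadic_passage_time:
  assumes "S = {t \<in> {0..real N}. b < p t}" and "S \<noteq> {}"
  shows "Inf S \<le> dyadic_passage_time N b p n"
proof (cases "dyadic_passage_time N b p n = N")
  case True
  obtain s where "s \<in> S"
    using assms(2) by blast
  then have "Inf S \<le> s" and "s \<le> N"
    using assms(1) by (auto intro!: cInf_lower bdd_belowI[of _ 0])
  then show ?thesis
    using True by simp
next
  case False
  then have "dyadic_passage_time N b p n \<in> S"
    using assms(1) dyadic_passage_time_cases dyadic_passage_time_nonneg dyadic_passage_time_le by auto
  then show ?thesis
    using assms(1) by (auto intro!: cInf_lower bdd_belowI[of _ 0])
qed

lemma dyadic_passage_time_eventually_less: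
  assumes rc: "\<forall>t\<ge>0. continuous (at_right t) p"
    and S: "S = {t \<in> {0..real N}. b < p t}" "S \<noteq> {}" and "0 < e"
  shows "eventually (\<lambda>n. dyadic_passage_time N b p n < Inf S + e) sequentially"
proof -
  obtain t1 where t1: "t1 \<in> S" "t1 < Inf S + e"
    using cInf_lessD[OF S(2)] \<open>0 < e\<close> by (metis less_add_same_cancel1)
  have "(p \<longlongrightarrow> p t1) (at_right t1)"
    using rc t1 S(1) by (simp add: continuous_within)
  then have "eventually (\<lambda>u. b < p u) (at_right t1)"
    using t1 S(1) by (intro order_tendstoD) auto
  then obtain d where d: "0 < d" "\<forall>u. t1 \<le> u \<and> u < t1 + d \<longrightarrow> b < p u"
    using eventually_at_right_imp_interval t1 S(1) by blast
  have "eventually (\<lambda>n. \<exists>k::nat. t1 \<le> real k / 2^n \<and> real k / 2^n < t1 + min d (Inf S + e - t1)) sequentially"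
    using t1 S(1) d(1) by (intro eventually_dyadic_point_in_interval) auto
  then show ?thesis
  proof (rule eventually_mono)
    fix n assume "\<exists>k::nat. t1 \<le> real k / 2^n \<and> real k / 2^n < t1 + min d (Inf S + e - t1)"
    then obtain k :: nat where k: "t1 \<le> real k / 2^n" "real k / 2^n < t1 + min d (Inf S + e - t1)"
      by blast
    then have "dyadic_passage_time N b p n \<le> real k / 2^n"
      using d(2) by (intro dyadic_passage_time_le_grid_point) auto
    then show "dyadic_passage_time N b p n < Inf S + e"
      using k(2) by linarith
  qed
qed

lemma condition_I'_uminus:
  assumes "condition_I' T p"
  shows "condition_I' (uminus ` T) (\<lambda>t. - p t)"
  unfolding condition_I'_def
proof (intro ballI allI impI)
  fix x' y' z' r t
  assume "x' \<in> uminus ` T" "y' \<in> uminus ` T" "z' \<in> uminus ` T"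
  then obtain x y z where "x \<in> T" "y \<in> T" "z \<in> T" and "x' = - x" "y' = - y" "z' = - z"
    by blast
  moreover assume "x' < y' \<and> y' < z' \<and> 0 \<le> r \<and> r < t \<and>
    ((- p r, - p t) = (x', z') \<or> (- p r, - p t) = (z', x'))"
  ultimately have "\<exists>s\<in>{r..t}. p s = y"
    using assms unfolding condition_I'_def by (metis neg_less_iff_less neg_equal_iff_equal prod.inject)
  then show "\<exists>s\<in>{r..t}. - p s = y'"
    using \<open>y' = - y\<close> by auto
qed

lemma condition_I'_value_after_first_passage:
  assumes "condition_I' T p" and "p 0 \<in> T" and "p \<sigma> \<in> T"
    and "0 < \<sigma>" and below: "\<forall>s\<in>{0..<\<sigma>}. p s \<le> b"
    and gap: "\<forall>z\<in>T. K < z \<longrightarrow> (\<exists>y\<in>T. b < y \<and> y < z)"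
  shows "p \<sigma> \<le> K"
proof (rule ccontr)
  assume "\<not> p \<sigma> \<le> K"
  then obtain y where y: "y \<in> T" "b < y" "y < p \<sigma>"
    using gap \<open>p \<sigma> \<in> T\<close> by force
  moreover have "p 0 < y"
    using below \<open>0 < \<sigma>\<close> y(2) by force
  ultimately obtain s where "s \<in> {0..\<sigma>}" "p s = y"
    using assms(1-4) unfolding condition_I'_def by blast
  then show False
    using below y by (cases "s = \<sigma>") force+
qed

lemma dyadic_passage_value_eventually_le:
  assumes start: "p 0 < b" and in_T: "\<forall>t\<ge>0. p t \<in> T"
    and rc: "\<forall>t\<ge>0. continuous (at_right t) p" and I: "condition_I' T p"
    and gap: "\<forall>z\<in>T. K < z \<longrightarrow> (\<exists>y\<in>T. b < y \<and> y < z)" and "b \<le> K" and "K < c"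
  shows "eventually (\<lambda>n. p (dyadic_passage_time N b p n) \<le> c) sequentially"
proof (cases "\<exists>t\<in>{0..real N}. b < p t")
  case False
  have "p (dyadic_passage_time N b p n) \<le> b" for n
    using False dyadic_passage_time_nonneg[of N b p n] dyadic_passage_time_le[of N b p n]
    by (simp add: not_less)
  then show ?thesis
    using \<open>b \<le> K\<close> \<open>K < c\<close> by (intro always_eventually allI) (meson less_imp_le order_trans)
next
  case True
  define S where "S = {t \<in> {0..real N}. b < p t}"
  have "S \<noteq> {}"
    using True S_def by auto
  have S_lower: "Inf S \<le> s" if "s \<in> S" for s
    using that S_def by (auto intro!: cInf_lower bdd_belowI[of _ 0])
  obtain d0 where d0: "0 < d0" "\<forall>u. 0 \<le> u \<and> u < d0 \<longrightarrow> p u < b"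
    using eventually_at_right_imp_interval[of "\<lambda>u. p u < b" 0] rc start
    by (auto simp: continuous_within intro: order_tendstoD)
  have "d0 \<le> Inf S"
    using \<open>S \<noteq> {}\<close> d0 S_def by (intro cInf_greatest) force+
  moreover have "Inf S \<le> N"
    using \<open>S \<noteq> {}\<close> S_lower S_def by force
  ultimately have "\<forall>s\<in>{0..<Inf S}. p s \<le> b"
    using S_lower S_def by force
  then have "p (Inf S) \<le> K"
    using \<open>0 < d0\<close> \<open>d0 \<le> Inf S\<close> in_T
    by (intro condition_I'_value_after_first_passage[OF I _ _ _ _ gap]) auto
  have "(p \<longlongrightarrow> p (Inf S)) (at_right (Inf S))"
    using rc \<open>0 < d0\<close> \<open>d0 \<le> Inf S\<close> by (simp add: continuous_within)
  then have "eventually (\<lambda>u. p u < c) (at_right (Inf S))"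
    by (rule order_tendstoD(2)) (use \<open>p (Inf S) \<le> K\<close> \<open>K < c\<close> in linarith)
  moreover have "p (Inf S) < c"
    using \<open>p (Inf S) \<le> K\<close> \<open>K < c\<close> by linarith
  ultimately obtain e where e: "0 < e" "\<forall>u. Inf S \<le> u \<and> u < Inf S + e \<longrightarrow> p u < c"
    using eventually_at_right_imp_interval by blast
  show ?thesis
    using dyadic_passage_time_eventually_less[OF rc S_def \<open>S \<noteq> {}\<close> \<open>0 < e\<close>]
  proof (rule eventually_mono)
    fix n
    assume "dyadic_passage_time N b p n < Inf S + e"
    then show "p (dyadic_passage_time N b p n) \<le> c"
      using e(2) Inf_le_dyadic_passage_time[OF S_def \<open>S \<noteq> {}\<close>] by (simp add: less_imp_le)
  qed
qed

lemma exists_gap_bound: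
  fixes T :: "real set"
  shows "\<exists>K\<ge>b. \<forall>z\<in>T. K < z \<longrightarrow> (\<exists>y\<in>T. b < y \<and> y < z)"
proof (cases "\<exists>y\<in>T. b < y")
  case True
  then obtain y where "y \<in> T" "b < y"
    by blast
  then show ?thesis
    by (intro exI[of _ y]) auto
qed (auto intro: exI[of _ b])

definition integral_martingale :: "'a measure \<Rightarrow> (real \<Rightarrow> 'a measure) \<Rightarrow> (real \<Rightarrow> 'a \<Rightarrow> real) \<Rightarrow> bool" where
  "integral_martingale M F X \<longleftrightarrow> (\<forall>t\<ge>0. integrable M (X t)) \<and>
     (\<forall>s t A. 0 \<le> s \<and> s \<le> t \<and> A \<in> sets (F s) \<longrightarrow>
        (\<integral>\<omega>. X t \<omega> * indicator A \<omega> \<partial>M) = (\<integral>\<omega>. X s \<omega> * indicator A \<omega> \<partial>M))"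

lemma integral_martingale_integrable:
  "integral_martingale M F X \<Longrightarrow> 0 \<le> t \<Longrightarrow> integrable M (X t)"
  unfolding integral_martingale_def by simp

lemma integral_martingaleD:
  assumes "integral_martingale M F X" and "0 \<le> s" and "s \<le> t" and "A \<in> sets (F s)"
  shows "(\<integral>\<omega>. X t \<omega> * indicator A \<omega> \<partial>M) = (\<integral>\<omega>. X s \<omega> * indicator A \<omega> \<partial>M)"
  using assms unfolding integral_martingale_def by blast

lemma integral_martingale_if_martingale:
  assumes "prob_space M" and "filtration_on M F" and "martingale M F X"
  shows "integral_martingale M F X"
  unfolding integral_martingale_def
proof (intro conjI allI impI)
  show "integrable M (X t)" if "0 \<le> t" for t
    using assms(3) that unfolding martingale_def by auto
  fix s t A
  assume h: "0 \<le> s \<and> s \<le> t \<and> A \<in> sets (F s)"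
  have sub: "subalgebra M (F s)"
    using assms(2) h unfolding filtration_on_def by auto
  interpret finite_measure_subalgebra M "F s"
    using assms(1) sub
    by (simp add: finite_measure_subalgebra_def finite_measure_subalgebra_axioms_def prob_space.finite_measure)
  have int: "integrable M (X t)" and meas: "X s \<in> borel_measurable (F s)"
    and ae: "AE \<omega> in M. real_cond_exp M (F s) (X t) \<omega> = X s \<omega>"
    using assms(3) h unfolding martingale_def by auto
  have [measurable]: "X s \<in> borel_measurable M" "A \<in> sets M"
    using measurable_from_subalg[OF sub meas] h sub by (auto simp: subalgebra_def)
  have "(\<integral>\<omega>\<in>A. X t \<omega> \<partial>M) = (\<integral>\<omega>\<in>A. real_cond_exp M (F s) (X t) \<omega> \<partial>M)"
    using real_cond_exp_intA[OF int] h by auto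
  also have "\<dots> = (\<integral>\<omega>\<in>A. X s \<omega> \<partial>M)"
    unfolding set_lebesgue_integral_def using ae by (intro integral_cong_AE) auto
  finally show "(\<integral>\<omega>. X t \<omega> * indicator A \<omega> \<partial>M) = (\<integral>\<omega>. X s \<omega> * indicator A \<omega> \<partial>M)"
    unfolding set_lebesgue_integral_def by (simp add: mult.commute)
qed

lemma integral_martingale_uminus:
  "integral_martingale M F X \<Longrightarrow> integral_martingale M F (\<lambda>t \<omega>. - X t \<omega>)"
  unfolding integral_martingale_def by simp

lemma sum_indicator_level_sets:
  fixes f :: "nat \<Rightarrow> real"
  assumes "\<omega> \<in> space M" and "\<kappa> \<omega> \<le> L"
  shows "(\<Sum>k\<le>L. f k * indicator (A \<inter> {\<omega>\<in>space M. \<kappa> \<omega> = k}) \<omega>) = f (\<kappa> \<omega>) * indicator A \<omega>"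
proof -
  have "f k * indicator (A \<inter> {\<omega>\<in>space M. \<kappa> \<omega> = k}) \<omega> = (if k = \<kappa> \<omega> then f k * indicator A \<omega> else 0)" for k
    using assms by (auto simp: indicator_def)
  then show ?thesis
    using assms by (simp add: sum.delta')
qed

lemma integrable_stopped:
  fixes Y :: "nat \<Rightarrow> 'a \<Rightarrow> real" and \<kappa> :: "'a \<Rightarrow> nat"
  assumes "\<forall>\<omega>\<in>space M. \<kappa> \<omega> \<le> L" and "\<forall>k\<le>L. {\<omega>\<in>space M. \<kappa> \<omega> = k} \<in> sets M"
    and "\<forall>k\<le>L. integrable M (Y k)"
  shows "integrable M (\<lambda>\<omega>. Y (\<kappa> \<omega>) \<omega>)"
proof (rule Bochner_Integration.integrable_cong[THEN iffD1, OF refl])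
  show "integrable M (\<lambda>\<omega>. \<Sum>k\<le>L. Y k \<omega> * indicator (space M \<inter> {\<omega>\<in>space M. \<kappa> \<omega> = k}) \<omega>)"
    using assms by (intro Bochner_Integration.integrable_sum integrable_real_mult_indicator) auto
  show "(\<Sum>k\<le>L. Y k \<omega> * indicator (space M \<inter> {\<omega>\<in>space M. \<kappa> \<omega> = k}) \<omega>) = Y (\<kappa> \<omega>) \<omega>"
    if "\<omega> \<in> space M" for \<omega>
    using sum_indicator_level_sets[where f="\<lambda>k. Y k \<omega>" and \<omega>=\<omega> and A="space M"] that assms(1) by simp
qed

lemma integral_martingale_optional_stopping:
  fixes X :: "real \<Rightarrow> 'a \<Rightarrow> real" and \<kappa> :: "'a \<Rightarrow> nat"
  assumes "filtration_on M F" and mart: "integral_martingale M F X"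
    and bounded: "\<forall>\<omega>\<in>space M. \<kappa> \<omega> \<le> L" and times: "\<forall>k\<le>L. 0 \<le> t k \<and> t k \<le> N"
    and stopped: "\<forall>k\<le>L. A \<inter> {\<omega>\<in>space M. \<kappa> \<omega> = k} \<in> sets (F (t k))"
  shows "(\<integral>\<omega>. X N \<omega> * indicator A \<omega> \<partial>M) = (\<integral>\<omega>. X (t (\<kappa> \<omega>)) \<omega> * indicator A \<omega> \<partial>M)"
proof -
  let ?E = "\<lambda>k. A \<inter> {\<omega>\<in>space M. \<kappa> \<omega> = k}"
  have sub: "sets (F (t k)) \<subseteq> sets M" if "k \<le> L" for k
    using assms(1) times that unfolding filtration_on_def subalgebra_def by simp
  have E_sets: "?E k \<in> sets M" if "k \<le> L" for k
    using sub[OF that] stopped that by blast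
  have int_t: "integrable M (X (t k))" if "k \<le> L" for k
    using times that by (intro integral_martingale_integrable[OF mart]) simp
  have "0 \<le> N"
    using times[rule_format, OF le0] by linarith
  then have int_N: "integrable M (X N)"
    by (rule integral_martingale_integrable[OF mart])
  have split: "(\<Sum>k\<le>L. f k * indicator (?E k) \<omega>) = f (\<kappa> \<omega>) * indicator A \<omega>"
    if "\<omega> \<in> space M" for \<omega> and f :: "nat \<Rightarrow> real"
    by (rule sum_indicator_level_sets) (use that bounded in auto)
  have "(\<integral>\<omega>. X N \<omega> * indicator A \<omega> \<partial>M) = (\<integral>\<omega>. (\<Sum>k\<le>L. X N \<omega> * indicator (?E k) \<omega>) \<partial>M)"
    by (intro Bochner_Integration.integral_cong refl split[symmetric])
  also have "\<dots> = (\<Sum>k\<le>L. (\<integral>\<omega>. X N \<omega> * indicator (?E k) \<omega> \<partial>M))"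
    using E_sets int_N by (intro Bochner_Integration.integral_sum integrable_real_mult_indicator) auto
  also have "\<dots> = (\<Sum>k\<le>L. (\<integral>\<omega>. X (t k) \<omega> * indicator (?E k) \<omega> \<partial>M))"
  proof (rule sum.cong)
    fix k assume "k \<in> {..L}"
    then show "(\<integral>\<omega>. X N \<omega> * indicator (?E k) \<omega> \<partial>M) = (\<integral>\<omega>. X (t k) \<omega> * indicator (?E k) \<omega> \<partial>M)"
      using times stopped by (intro integral_martingaleD[OF mart]) simp_all
  qed simp
  also have "\<dots> = (\<integral>\<omega>. (\<Sum>k\<le>L. X (t k) \<omega> * indicator (?E k) \<omega>) \<partial>M)"
    using E_sets int_t by (intro Bochner_Integration.integral_sum[symmetric] integrable_real_mult_indicator) auto
  also have "\<dots> = (\<integral>\<omega>. X (t (\<kappa> \<omega>)) \<omega> * indicator A \<omega> \<partial>M)"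
    by (intro Bochner_Integration.integral_cong refl split)
  finally show ?thesis .
qed

lemma (in prob_space) expectation_le_of_lower_bound:
  fixes X :: "'a \<Rightarrow> real"
  assumes "integrable M X" and "\<forall>\<omega>\<in>space M. m \<le> X \<omega>" and "m \<le> b"
  shows "b - (b - m) * prob {\<omega>\<in>space M. X \<omega> \<le> b} \<le> expectation X"
proof -
  let ?I = "{\<omega>\<in>space M. X \<omega> \<le> b}"
  have [measurable]: "?I \<in> events"
    using assms(1) by measurable
  have "b - (b - m) * prob ?I = (\<integral>\<omega>. b - (b - m) * indicator ?I \<omega> \<partial>M)"
    by (subst Bochner_Integration.integral_diff) (auto simp: prob_space emeasure_eq_measure)
  also have "\<dots> \<le> expectation X"
  proof (rule integral_mono)
    show "integrable M (\<lambda>\<omega>. b - (b - m) * indicator ?I \<omega>)"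
      by (auto simp: emeasure_eq_measure)
    show "b - (b - m) * indicator ?I \<omega> \<le> X \<omega>" if "\<omega> \<in> space M" for \<omega>
      using assms(2,3) that by (auto simp: indicator_def)
  qed fact
  finally show ?thesis .
qed

lemma integral_mult_indicator_tendsto_0:
  fixes g :: "'a \<Rightarrow> real"
  assumes "integrable M g" and "\<And>n. A n \<in> sets M"
    and "\<forall>\<omega>\<in>space M. eventually (\<lambda>n. \<omega> \<notin> A n) sequentially"
  shows "(\<lambda>n. \<integral>\<omega>. g \<omega> * indicator (A n) \<omega> \<partial>M) \<longlonglongrightarrow> 0"
proof -
  have "(\<lambda>n. \<integral>\<omega>. g \<omega> * indicator (A n) \<omega> \<partial>M) \<longlonglongrightarrow> (\<integral>\<omega>. 0 \<partial>M)"
  proof (rule integral_dominated_convergence[where w="\<lambda>\<omega>. norm (g \<omega>)"])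
    show "AE \<omega> in M. (\<lambda>n. g \<omega> * indicator (A n) \<omega>) \<longlonglongrightarrow> 0"
    proof (rule AE_I2)
      fix \<omega> assume "\<omega> \<in> space M"
      then have "eventually (\<lambda>n. \<omega> \<notin> A n) sequentially"
        using assms(3) by blast
      then have "eventually (\<lambda>n. g \<omega> * indicator (A n) \<omega> = 0) sequentially"
        by (rule eventually_mono) simp
      then show "(\<lambda>n. g \<omega> * indicator (A n) \<omega>) \<longlonglongrightarrow> 0"
        by (rule tendsto_eventually)
    qed
    show "integrable M (\<lambda>\<omega>. norm (g \<omega>))"
      using assms(1) by simp
    show "(\<lambda>\<omega>. g \<omega> * indicator (A n) \<omega>) \<in> borel_measurable M" for n
      using assms(1,2) by (intro borel_measurable_integrable integrable_real_mult_indicator)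
    show "AE \<omega> in M. norm (g \<omega> * indicator (A n) \<omega>) \<le> norm (g \<omega>)" for n
      by (intro AE_I2) (simp add: indicator_def)
  qed simp
  then show ?thesis
    by simp
qed

lemma power2_le_max_power2:
  fixes y m c :: real
  assumes "m \<le> y" and "y \<le> c"
  shows "y\<^sup>2 \<le> max (m\<^sup>2) (c\<^sup>2)"
proof (cases "0 \<le> y")
  case True
  then have "y\<^sup>2 \<le> c\<^sup>2"
    using assms by (intro power_mono) auto
  then show ?thesis
    by simp
next
  case False
  then have "(- y)\<^sup>2 \<le> (- m)\<^sup>2"
    using assms by (intro power_mono) auto
  then show ?thesis
    by simp
qed

locale quadratic_martingale = prob_space M
  for M :: "'a measure" +
  fixes F :: "real \<Rightarrow> 'a measure" and \<xi> :: "real \<Rightarrow> 'a \<Rightarrow> real"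
  assumes filtration: "filtration_on M F"
    and adapted: "\<And>t. 0 \<le> t \<Longrightarrow> \<xi> t \<in> borel_measurable (F t)"
    and martingale: "integral_martingale M F \<xi>"
    and martingale_square: "integral_martingale M F (\<lambda>t \<omega>. (\<xi> t \<omega>)\<^sup>2 - t)"

lemma quadratic_martingale_if_martingales:
  assumes "prob_space M" and "filtration_on M F"
    and "martingale M F \<xi>" and "martingale M F (\<lambda>t \<omega>. (\<xi> t \<omega>)\<^sup>2 - t)"
  shows "quadratic_martingale M F \<xi>"
  unfolding quadratic_martingale_def quadratic_martingale_axioms_def
proof (intro conjI allI impI)
  show "\<xi> t \<in> borel_measurable (F t)" if "0 \<le> t" for t
    using assms(3) that unfolding martingale_def by simp
qed (use assms integral_martingale_if_martingale in simp_all)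

lemma quadratic_martingale_uminus:
  assumes "quadratic_martingale M F \<xi>"
  shows "quadratic_martingale M F (\<lambda>t \<omega>. - \<xi> t \<omega>)"
  using assms unfolding quadratic_martingale_def quadratic_martingale_axioms_def
  by (simp add: integral_martingale_uminus)

context quadratic_martingale
begin

abbreviation passage_index :: "nat \<Rightarrow> real \<Rightarrow> nat \<Rightarrow> 'a \<Rightarrow> nat" where
  "passage_index N b n \<omega> \<equiv> dyadic_passage_index N b (\<lambda>t. \<xi> t \<omega>) n"

abbreviation passage_time :: "nat \<Rightarrow> real \<Rightarrow> nat \<Rightarrow> 'a \<Rightarrow> real" where
  "passage_time N b n \<omega> \<equiv> dyadic_passage_time N b (\<lambda>t. \<xi> t \<omega>) n"

lemma subalgebra_F: "0 \<le> t \<Longrightarrow> subalgebra M (F t)"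
  using filtration unfolding filtration_on_def by simp

lemma integrable_square:
  assumes "0 \<le> t"
  shows "integrable M (\<lambda>\<omega>. (\<xi> t \<omega>)\<^sup>2)"
proof -
  have "integrable M (\<lambda>\<omega>. ((\<xi> t \<omega>)\<^sup>2 - t) + t)"
    using integral_martingale_integrable[OF martingale_square assms] integrable_const[of t]
    by (rule Bochner_Integration.integrable_add)
  then show ?thesis
    by simp
qed

lemma adapted_mono:
  assumes "0 \<le> u" and "u \<le> s"
  shows "\<xi> u \<in> borel_measurable (F s)"
proof (rule measurable_from_subalg[OF _ adapted[OF assms(1)]])
  show "subalgebra (F s) (F u)"
    using filtration assms subalgebra_F[of u] subalgebra_F[of s]
    unfolding filtration_on_def subalgebra_def by auto
qed

lemma sets_F_greater:
  assumes "0 \<le> t"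
  shows "{\<omega> \<in> space M. c < \<xi> t \<omega>} \<in> sets (F t)"
proof -
  have "space (F t) = space M"
    using subalgebra_F[OF assms] unfolding subalgebra_def by simp
  then have "{\<omega> \<in> space M. c < \<xi> t \<omega>} = \<xi> t -` {c<..} \<inter> space (F t)"
    by auto
  also have "\<dots> \<in> sets (F t)"
    using adapted[OF assms] by (rule measurable_sets) simp
  finally show ?thesis .
qed

lemma passage_index_sets:
  "{\<omega> \<in> space M. passage_index N b n \<omega> = k} \<in> sets (F (real k / 2^n))"
proof -
  let ?G = "F (real k / 2^n)"
  let ?E = "\<lambda>j. {\<omega> \<in> space M. N * 2^n \<le> j \<or> b < \<xi> (real j / 2^n) \<omega>}"
  have space: "space ?G = space M"
    using subalgebra_F[of "real k / 2^n"] unfolding subalgebra_def by simp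
  have E: "?E j \<in> sets ?G" if "j \<le> k" for j
  proof (cases "N * 2^n \<le> j")
    case True
    then show ?thesis
      using sets.top[of ?G] space by simp
  next
    case False
    have "\<xi> (real j / 2^n) \<in> borel_measurable ?G"
      using that by (intro adapted_mono) (auto simp: divide_right_mono)
    then have "\<xi> (real j / 2^n) -` {b<..} \<inter> space ?G \<in> sets ?G"
      by (rule measurable_sets) simp
    moreover have "?E j = \<xi> (real j / 2^n) -` {b<..} \<inter> space ?G"
      using False space by auto
    ultimately show ?thesis
      by simp
  qed
  have "{\<omega> \<in> space M. passage_index N b n \<omega> = k} = ?E k - (\<Union>j<k. ?E j)"
    by (rule set_eqI) (simp add: dyadic_passage_index_eq_iff Ball_def cong: conj_cong)
  also have "\<dots> \<in> sets ?G"
  proof (rule sets.Diff)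
    show "?E k \<in> sets ?G"
      by (rule E) simp
    show "(\<Union>j<k. ?E j) \<in> sets ?G"
      by (rule sets.finite_UN) (simp_all add: E)
  qed
  finally show ?thesis .
qed

lemma passage_value_sets:
  "{\<omega> \<in> space M. c < \<xi> (passage_time N b n \<omega>) \<omega>} \<inter> {\<omega> \<in> space M. passage_index N b n \<omega> = k}
     \<in> sets (F (real k / 2^n))"
proof -
  have "{\<omega> \<in> space M. c < \<xi> (passage_time N b n \<omega>) \<omega>} \<inter> {\<omega> \<in> space M. passage_index N b n \<omega> = k} =
      {\<omega> \<in> space M. c < \<xi> (real k / 2^n) \<omega>} \<inter> {\<omega> \<in> space M. passage_index N b n \<omega> = k}"
    unfolding dyadic_passage_time_def by auto
  also have "\<dots> \<in> sets (F (real k / 2^n))"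
    using sets_F_greater passage_index_sets by (intro sets.Int) simp_all
  finally show ?thesis .
qed

lemma integrable_at_passage_index:
  fixes f :: "nat \<Rightarrow> 'a \<Rightarrow> real"
  assumes "\<And>k. integrable M (f k)"
  shows "integrable M (\<lambda>\<omega>. f (passage_index N b n \<omega>) \<omega>)"
proof (rule integrable_stopped[where Y=f and \<kappa>="passage_index N b n" and L="N * 2^n"])
  show "\<forall>k\<le>N * 2^n. {\<omega> \<in> space M. passage_index N b n \<omega> = k} \<in> sets M"
  proof (intro allI impI)
    fix k
    show "{\<omega> \<in> space M. passage_index N b n \<omega> = k} \<in> sets M"
      using passage_index_sets[of N b n k] subalgebra_F[of "real k / 2^n"]
      unfolding subalgebra_def by auto
  qed
  show "\<forall>\<omega>\<in>space M. passage_index N b n \<omega> \<le> N * 2^n"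
    by (simp add: dyadic_passage_index_le)
  show "\<forall>k\<le>N * 2^n. integrable M (f k)"
    by (simp add: assms)
qed

lemma optional_stopping_at_passage_time:
  assumes "integral_martingale M F Y"
    and "\<And>k. A \<inter> {\<omega> \<in> space M. passage_index N b n \<omega> = k} \<in> sets (F (real k / 2^n))"
  shows "(\<integral>\<omega>. Y N \<omega> * indicator A \<omega> \<partial>M) = (\<integral>\<omega>. Y (passage_time N b n \<omega>) \<omega> * indicator A \<omega> \<partial>M)"
  unfolding dyadic_passage_time_def
proof (rule integral_martingale_optional_stopping[OF filtration assms(1)])
  show "\<forall>\<omega>\<in>space M. passage_index N b n \<omega> \<le> N * 2^n"
    by (simp add: dyadic_passage_index_le)
  show "\<forall>k\<le>N * 2^n. 0 \<le> real k / 2^n \<and> real k / 2^n \<le> real N"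
    by (simp add: dyadic_point_le_of_le)
  show "\<forall>k\<le>N * 2^n. A \<inter> {\<omega> \<in> space M. passage_index N b n \<omega> = k} \<in> sets (F (real k / 2^n))"
    by (simp add: assms(2))
qed

lemma integral_mult_indicator_space:
  fixes f :: "'a \<Rightarrow> real"
  shows "(\<integral>\<omega>. f \<omega> * indicator (space M) \<omega> \<partial>M) = expectation f"
  by (rule Bochner_Integration.integral_cong) simp_all

lemma expectation_at_passage_time:
  assumes "integral_martingale M F Y"
  shows "expectation (\<lambda>\<omega>. Y (passage_time N b n \<omega>) \<omega>) = expectation (Y 0)"
proof -
  have space: "space M \<in> sets (F 0)"
    using subalgebra_F[of 0] sets.top[of "F 0"] unfolding subalgebra_def by simp
  have stopped: "space M \<inter> {\<omega> \<in> space M. passage_index N b n \<omega> = k} \<in> sets (F (real k / 2^n))" for k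
    using passage_index_sets[of N b n k] by (simp only: Int_absorb1[OF Collect_restrict])
  have "expectation (\<lambda>\<omega>. Y (passage_time N b n \<omega>) \<omega>) =
      (\<integral>\<omega>. Y (passage_time N b n \<omega>) \<omega> * indicator (space M) \<omega> \<partial>M)"
    by (rule integral_mult_indicator_space[symmetric])
  also have "\<dots> = (\<integral>\<omega>. Y N \<omega> * indicator (space M) \<omega> \<partial>M)"
    by (rule optional_stopping_at_passage_time[OF assms stopped, symmetric])
  also have "\<dots> = (\<integral>\<omega>. Y 0 \<omega> * indicator (space M) \<omega> \<partial>M)"
    using space by (intro integral_martingaleD[OF assms]) simp_all
  also have "\<dots> = expectation (Y 0)"
    by (rule integral_mult_indicator_space)
  finally show ?thesis .
qed

lemma integrable_at_passage_time: "integrable M (\<lambda>\<omega>. \<xi> (passage_time N b n \<omega>) \<omega>)"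
  using integrable_at_passage_index[of "\<lambda>k. \<xi> (real k / 2^n)"] integral_martingale_integrable[OF martingale]
  unfolding dyadic_passage_time_def by simp

lemma measurable_at_passage_time [measurable]:
  "(\<lambda>\<omega>. \<xi> (passage_time N b n \<omega>) \<omega>) \<in> borel_measurable M"
  by (rule borel_measurable_integrable[OF integrable_at_passage_time])

lemma integrable_passage_time: "integrable M (passage_time N b n)"
  using integrable_at_passage_index[of "\<lambda>k \<omega>. real k / 2^n"]
  unfolding dyadic_passage_time_def by simp

lemma integrable_square_at_passage_time:
  "integrable M (\<lambda>\<omega>. (\<xi> (passage_time N b n \<omega>) \<omega>)\<^sup>2)"
  using integrable_at_passage_index[of "\<lambda>k \<omega>. (\<xi> (real k / 2^n) \<omega>)\<^sup>2"] integrable_square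
  unfolding dyadic_passage_time_def by simp

lemma expectation_passage_time_le_second_moment:
  "expectation (passage_time N b n) \<le> expectation (\<lambda>\<omega>. (\<xi> (passage_time N b n \<omega>) \<omega>)\<^sup>2)"
proof -
  have "expectation (\<lambda>\<omega>. (\<xi> (passage_time N b n \<omega>) \<omega>)\<^sup>2 - passage_time N b n \<omega>) =
      expectation (\<lambda>\<omega>. (\<xi> 0 \<omega>)\<^sup>2 - 0)"
    by (rule expectation_at_passage_time[OF martingale_square])
  then have "expectation (\<lambda>\<omega>. (\<xi> (passage_time N b n \<omega>) \<omega>)\<^sup>2) - expectation (passage_time N b n) =
      expectation (\<lambda>\<omega>. (\<xi> 0 \<omega>)\<^sup>2)"
    using integrable_square_at_passage_time integrable_passage_time by simp
  moreover have "0 \<le> expectation (\<lambda>\<omega>. (\<xi> 0 \<omega>)\<^sup>2)"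
    by (rule integral_nonneg_AE) simp
  ultimately show ?thesis
    by linarith
qed

lemma prob_not_passed_le_expectation_passage_time:
  "real N * prob {\<omega> \<in> space M. \<xi> (passage_time N b n \<omega>) \<omega> \<le> b} \<le> expectation (passage_time N b n)"
proof -
  let ?I = "{\<omega> \<in> space M. \<xi> (passage_time N b n \<omega>) \<omega> \<le> b}"
  have [measurable]: "?I \<in> sets M"
    by measurable
  have "real N * prob ?I = (\<integral>\<omega>. real N * indicator ?I \<omega> \<partial>M)"
    by (simp add: emeasure_eq_measure)
  also have "\<dots> \<le> expectation (passage_time N b n)"
  proof (rule integral_mono)
    show "real N * indicator ?I \<omega> \<le> passage_time N b n \<omega>" if "\<omega> \<in> space M" for \<omega>
      using dyadic_passage_time_cases[of N b "\<lambda>t. \<xi> t \<omega>" n] dyadic_passage_time_nonneg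
      by (auto simp: indicator_def)
  qed (auto simp: emeasure_eq_measure integrable_passage_time)
  finally show ?thesis .
qed

lemma prob_not_passed_ge:
  assumes lower: "\<And>\<omega> t. \<omega> \<in> space M \<Longrightarrow> 0 \<le> t \<Longrightarrow> m \<le> \<xi> t \<omega>"
    and start: "\<And>\<omega>. \<omega> \<in> space M \<Longrightarrow> \<xi> 0 \<omega> = x" and "x \<le> b"
  shows "b - x \<le> (b - m) * prob {\<omega> \<in> space M. \<xi> (passage_time N b n \<omega>) \<omega> \<le> b}"
proof -
  obtain \<omega>0 where "\<omega>0 \<in> space M"
    using not_empty by blast
  then have "m \<le> b"
    using lower[of \<omega>0 0] start \<open>x \<le> b\<close> by force
  have "b - (b - m) * prob {\<omega> \<in> space M. \<xi> (passage_time N b n \<omega>) \<omega> \<le> b} \<le>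
      expectation (\<lambda>\<omega>. \<xi> (passage_time N b n \<omega>) \<omega>)"
    using integrable_at_passage_time lower dyadic_passage_time_nonneg \<open>m \<le> b\<close>
    by (intro expectation_le_of_lower_bound) auto
  also have "\<dots> = expectation (\<xi> 0)"
    by (rule expectation_at_passage_time[OF martingale])
  also have "\<dots> = x"
    using start by (simp add: prob_space cong: Bochner_Integration.integral_cong)
  finally show ?thesis
    by simp
qed

lemma second_moment_at_passage_time_ge:
  assumes lower: "\<And>\<omega> t. \<omega> \<in> space M \<Longrightarrow> 0 \<le> t \<Longrightarrow> m \<le> \<xi> t \<omega>"
    and start: "\<And>\<omega>. \<omega> \<in> space M \<Longrightarrow> \<xi> 0 \<omega> = x" and "x \<le> b"
  shows "real N * (b - x) \<le> (b - m) * expectation (\<lambda>\<omega>. (\<xi> (passage_time N b n \<omega>) \<omega>)\<^sup>2)"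
proof -
  let ?q = "prob {\<omega> \<in> space M. \<xi> (passage_time N b n \<omega>) \<omega> \<le> b}"
  obtain \<omega>0 where "\<omega>0 \<in> space M"
    using not_empty by blast
  then have "0 \<le> b - m"
    using lower[of \<omega>0 0] start \<open>x \<le> b\<close> by force
  have "real N * (b - x) \<le> real N * ((b - m) * ?q)"
    using prob_not_passed_ge[OF lower start \<open>x \<le> b\<close>] by (intro mult_left_mono) auto
  also have "\<dots> = (b - m) * (real N * ?q)"
    by simp
  also have "\<dots> \<le> (b - m) * expectation (\<lambda>\<omega>. (\<xi> (passage_time N b n \<omega>) \<omega>)\<^sup>2)"
    by (rule mult_left_mono[OF order_trans[OF prob_not_passed_le_expectation_passage_time
          expectation_passage_time_le_second_moment] \<open>0 \<le> b - m\<close>])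
  finally show ?thesis .
qed

lemma optional_stopping_square_above:
  fixes N n :: nat and b c :: real
  defines "A \<equiv> {\<omega> \<in> space M. c < \<xi> (passage_time N b n \<omega>) \<omega>}"
  shows "(\<integral>\<omega>. ((\<xi> (passage_time N b n \<omega>) \<omega>)\<^sup>2 - passage_time N b n \<omega>) * indicator A \<omega> \<partial>M) =
    (\<integral>\<omega>. (\<xi> N \<omega>)\<^sup>2 * indicator A \<omega> \<partial>M) - N * prob A"
proof -
  have [measurable]: "A \<in> sets M"
    unfolding A_def by measurable
  have "integrable M (\<lambda>\<omega>. (\<xi> N \<omega>)\<^sup>2 * indicator A \<omega>)"
    using integrable_square by (intro integrable_real_mult_indicator) auto
  then have "(\<integral>\<omega>. ((\<xi> N \<omega>)\<^sup>2 - N) * indicator A \<omega> \<partial>M) = (\<integral>\<omega>. (\<xi> N \<omega>)\<^sup>2 * indicator A \<omega> \<partial>M) - N * prob A"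
    by (simp add: left_diff_distrib emeasure_eq_measure)
  moreover have "(\<integral>\<omega>. ((\<xi> N \<omega>)\<^sup>2 - N) * indicator A \<omega> \<partial>M) =
      (\<integral>\<omega>. ((\<xi> (passage_time N b n \<omega>) \<omega>)\<^sup>2 - passage_time N b n \<omega>) * indicator A \<omega> \<partial>M)"
    unfolding A_def by (rule optional_stopping_at_passage_time[OF martingale_square passage_value_sets])
  ultimately show ?thesis
    by simp
qed

lemma second_moment_at_passage_time_le:
  fixes N n :: nat and b c m :: real
  assumes lower: "\<And>\<omega> t. \<omega> \<in> space M \<Longrightarrow> 0 \<le> t \<Longrightarrow> m \<le> \<xi> t \<omega>"
  defines "A \<equiv> {\<omega> \<in> space M. c < \<xi> (passage_time N b n \<omega>) \<omega>}"
  shows "expectation (\<lambda>\<omega>. (\<xi> (passage_time N b n \<omega>) \<omega>)\<^sup>2) \<le>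
    max (m\<^sup>2) (c\<^sup>2) + (\<integral>\<omega>. (\<xi> N \<omega>)\<^sup>2 * indicator A \<omega> \<partial>M)"
proof -
  define \<tau> where "\<tau> = passage_time N b n"
  define X where "X \<omega> = \<xi> (\<tau> \<omega>) \<omega>" for \<omega>
  define C where "C = max (m\<^sup>2) (c\<^sup>2)"
  have [measurable]: "A \<in> sets M"
    unfolding A_def by measurable
  have int_A: "integrable M (\<lambda>\<omega>. ((X \<omega>)\<^sup>2 - \<tau> \<omega>) * indicator A \<omega>)"
    using integrable_square_at_passage_time integrable_passage_time
    unfolding X_def \<tau>_def by (intro integrable_real_mult_indicator) auto
  have "expectation (\<lambda>\<omega>. (X \<omega>)\<^sup>2) \<le> (\<integral>\<omega>. C + ((X \<omega>)\<^sup>2 - \<tau> \<omega>) * indicator A \<omega> + real N * indicator A \<omega> \<partial>M)"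
  proof (rule integral_mono)
    show "integrable M (\<lambda>\<omega>. C + ((X \<omega>)\<^sup>2 - \<tau> \<omega>) * indicator A \<omega> + real N * indicator A \<omega>)"
      using int_A by (intro Bochner_Integration.integrable_add) (auto simp: emeasure_eq_measure)
    fix \<omega> assume "\<omega> \<in> space M"
    have "0 \<le> C" and "\<tau> \<omega> \<le> N"
      unfolding C_def \<tau>_def by (auto simp: le_max_iff_disj dyadic_passage_time_le)
    moreover have "(X \<omega>)\<^sup>2 \<le> C" if "\<omega> \<notin> A"
      using that \<open>\<omega> \<in> space M\<close> lower[of \<omega>] dyadic_passage_time_nonneg
      unfolding A_def C_def X_def \<tau>_def by (intro power2_le_max_power2) auto
    ultimately show "(X \<omega>)\<^sup>2 \<le> C + ((X \<omega>)\<^sup>2 - \<tau> \<omega>) * indicator A \<omega> + real N * indicator A \<omega>"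
      by (cases "\<omega> \<in> A") auto
  qed (simp add: X_def \<tau>_def integrable_square_at_passage_time)
  also have "\<dots> = C + (\<integral>\<omega>. ((X \<omega>)\<^sup>2 - \<tau> \<omega>) * indicator A \<omega> \<partial>M) + N * prob A"
    using int_A by (simp add: prob_space emeasure_eq_measure)
  also have "\<dots> = C + (\<integral>\<omega>. (\<xi> N \<omega>)\<^sup>2 * indicator A \<omega> \<partial>M)"
    unfolding X_def \<tau>_def A_def optional_stopping_square_above by simp
  finally show ?thesis
    unfolding X_def \<tau>_def C_def .
qed

lemma integral_above_passage_value_tendsto_0:
  assumes in_T: "\<forall>\<omega>\<in>space M. \<forall>t\<ge>0. \<xi> t \<omega> \<in> T" and start: "\<forall>\<omega>\<in>space M. \<xi> 0 \<omega> < b"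
    and rc: "\<forall>\<omega>\<in>space M. \<forall>t\<ge>0. continuous (at_right t) (\<lambda>t. \<xi> t \<omega>)"
    and I: "\<forall>\<omega>\<in>space M. condition_I' T (\<lambda>t. \<xi> t \<omega>)"
    and gap: "\<forall>z\<in>T. K < z \<longrightarrow> (\<exists>y\<in>T. b < y \<and> y < z)" and "b \<le> K" and "K < c"
  shows "(\<lambda>n. \<integral>\<omega>. (\<xi> N \<omega>)\<^sup>2 * indicator {\<omega> \<in> space M. c < \<xi> (passage_time N b n \<omega>) \<omega>} \<omega> \<partial>M)
    \<longlonglongrightarrow> 0"
proof (rule integral_mult_indicator_tendsto_0)
  show "integrable M (\<lambda>\<omega>. (\<xi> N \<omega>)\<^sup>2)"
    by (rule integrable_square) simp
  show "{\<omega> \<in> space M. c < \<xi> (passage_time N b n \<omega>) \<omega>} \<in> sets M" for n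
    by measurable
  show "\<forall>\<omega>\<in>space M. eventually (\<lambda>n. \<omega> \<notin> {\<omega> \<in> space M. c < \<xi> (passage_time N b n \<omega>) \<omega>}) sequentially"
  proof
    fix \<omega> assume "\<omega> \<in> space M"
    then have "eventually (\<lambda>n. \<xi> (passage_time N b n \<omega>) \<omega> \<le> c) sequentially"
      using in_T start rc I gap \<open>b \<le> K\<close> \<open>K < c\<close>
      by (intro dyadic_passage_value_eventually_le[where T=T and K=K]) auto
    then show "eventually (\<lambda>n. \<omega> \<notin> {\<omega> \<in> space M. c < \<xi> (passage_time N b n \<omega>) \<omega>}) sequentially"
      by (rule eventually_mono) simp
  qed
qed

theorem condition_I'_fails_if_bdd_below:
  assumes lower: "\<forall>y\<in>T. m \<le> y" and "x \<in> T"
    and in_T: "\<forall>\<omega>\<in>space M. \<forall>t\<ge>0. \<xi> t \<omega> \<in> T" and start: "\<forall>\<omega>\<in>space M. \<xi> 0 \<omega> = x"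
    and rc: "\<forall>\<omega>\<in>space M. \<forall>t\<ge>0. continuous (at_right t) (\<lambda>t. \<xi> t \<omega>)"
  shows "\<exists>\<omega>\<in>space M. \<not> condition_I' T (\<lambda>t. \<xi> t \<omega>)"
proof (rule ccontr)
  assume "\<not> ?thesis"
  then have I: "\<forall>\<omega>\<in>space M. condition_I' T (\<lambda>t. \<xi> t \<omega>)"
    by blast
  define b where "b = x + 1"
  obtain K where "b \<le> K" and gap: "\<forall>z\<in>T. K < z \<longrightarrow> (\<exists>y\<in>T. b < y \<and> y < z)"
    using exists_gap_bound by blast
  define C where "C = max (m\<^sup>2) ((K + 1)\<^sup>2)"
  define A where "A N n = {\<omega> \<in> space M. K + 1 < \<xi> (passage_time N b n \<omega>) \<omega>}" for N n
  have lower': "\<And>\<omega> t. \<omega> \<in> space M \<Longrightarrow> 0 \<le> t \<Longrightarrow> m \<le> \<xi> t \<omega>"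
    using lower in_T by blast
  have "m < b"
    using lower \<open>x \<in> T\<close> b_def by force
  obtain N :: nat where N: "(b - m) * (C + 1) < real N"
    using reals_Archimedean2 by blast
  have "(\<lambda>n. \<integral>\<omega>. (\<xi> N \<omega>)\<^sup>2 * indicator (A N n) \<omega> \<partial>M) \<longlonglongrightarrow> 0"
    unfolding A_def using in_T start rc I gap \<open>b \<le> K\<close>
    by (intro integral_above_passage_value_tendsto_0[where T=T and K=K]) (auto simp: b_def)
  then have "eventually (\<lambda>n. (\<integral>\<omega>. (\<xi> N \<omega>)\<^sup>2 * indicator (A N n) \<omega> \<partial>M) < 1) sequentially"
    by (rule order_tendstoD) simp
  then obtain n where small: "(\<integral>\<omega>. (\<xi> N \<omega>)\<^sup>2 * indicator (A N n) \<omega> \<partial>M) < 1"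
    by (auto simp: eventually_sequentially)
  have "real N = real N * (b - x)"
    by (simp add: b_def)
  also have "\<dots> \<le> (b - m) * expectation (\<lambda>\<omega>. (\<xi> (passage_time N b n \<omega>) \<omega>)\<^sup>2)"
    using start by (intro second_moment_at_passage_time_ge[OF lower']) (auto simp: b_def)
  also have "\<dots> \<le> (b - m) * (C + (\<integral>\<omega>. (\<xi> N \<omega>)\<^sup>2 * indicator (A N n) \<omega> \<partial>M))"
    using \<open>m < b\<close> second_moment_at_passage_time_le[where c="K + 1" and N=N and b=b and n=n, OF lower']
    unfolding A_def C_def by (intro mult_left_mono) auto
  also have "\<dots> < (b - m) * (C + 1)"
    using \<open>m < b\<close> small by simp
  finally show False
    using N by simp
qed

end

theorem mainTheorem4:
  fixes M :: "'a measure" and F :: "real \<Rightarrow> 'a measure"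
    and T :: "real set" and x :: real and \<xi> :: "real \<Rightarrow> 'a \<Rightarrow> real"
  assumes "prob_space M"
    and "filtration_on M F"
    and "closed T" and "T \<noteq> {}" and "bdd_above T \<or> bdd_below T"
    and "x \<in> T"
  shows "\<not> ((\<forall>\<omega>\<in>space M. \<forall>t\<ge>0. \<xi> t \<omega> \<in> T) \<and>
            (\<forall>\<omega>\<in>space M. \<xi> 0 \<omega> = x) \<and>
            (\<forall>\<omega>\<in>space M. cadlag (\<lambda>t. \<xi> t \<omega>)) \<and>
            (\<forall>\<omega>\<in>space M. condition_I' T (\<lambda>t. \<xi> t \<omega>)) \<and>
            martingale M F \<xi> \<and>
            martingale M F (\<lambda>t \<omega>. (\<xi> t \<omega>)\<^sup>2 - t))"
proof
  assume "(\<forall>\<omega>\<in>space M. \<forall>t\<ge>0. \<xi> t \<omega> \<in> T) \<and>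
            (\<forall>\<omega>\<in>space M. \<xi> 0 \<omega> = x) \<and>
            (\<forall>\<omega>\<in>space M. cadlag (\<lambda>t. \<xi> t \<omega>)) \<and>
            (\<forall>\<omega>\<in>space M. condition_I' T (\<lambda>t. \<xi> t \<omega>)) \<and>
            martingale M F \<xi> \<and>
            martingale M F (\<lambda>t \<omega>. (\<xi> t \<omega>)\<^sup>2 - t)"
  then have in_T: "\<forall>\<omega>\<in>space M. \<forall>t\<ge>0. \<xi> t \<omega> \<in> T" and start: "\<forall>\<omega>\<in>space M. \<xi> 0 \<omega> = x"
    and rc: "\<forall>\<omega>\<in>space M. \<forall>t\<ge>0. continuous (at_right t) (\<lambda>t. \<xi> t \<omega>)"
    and I: "\<forall>\<omega>\<in>space M. condition_I' T (\<lambda>t. \<xi> t \<omega>)"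
    and qm: "quadratic_martingale M F \<xi>"
    using quadratic_martingale_if_martingales[OF assms(1,2)] unfolding cadlag_def by auto
  show False
  proof (cases "bdd_below T")
    case True
    then obtain m where "\<forall>y\<in>T. m \<le> y"
      unfolding bdd_below_def by blast
    from quadratic_martingale.condition_I'_fails_if_bdd_below[OF qm this \<open>x \<in> T\<close> in_T start rc]
    show False
      using I by blast
  next
    case False
    then obtain m where "\<forall>y\<in>T. y \<le> m"
      using assms(5) unfolding bdd_above_def by auto
    then have "\<forall>y\<in>uminus ` T. - m \<le> y"
      by auto
    moreover have "\<forall>\<omega>\<in>space M. \<forall>t\<ge>0. continuous (at_right t) (\<lambda>t. - \<xi> t \<omega>)"
      using rc by (simp add: continuous_minus)
    ultimately show False
      using quadratic_martingale.condition_I'_fails_if_bdd_below[OF quadratic_martingale_uminus[OF qm], of "uminus ` T" "- m" "- x"]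
        \<open>x \<in> T\<close> in_T start I condition_I'_uminus by auto
  qed
qed

end
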